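(* Let $\kappa>0$ (possibly depending on $\beta$) with $\tilde\kappa=\kappa\beta>\frac1\pi$, and let $\varphi_\beta$ be a minimizer of $F_{\beta,\kappa}$ in $\mathcal J$. Then, for $\beta>0$ small enough, $\varphi_\beta(1)\ge\pi$.
   Context: For parameters $\beta>0$ and $\kappa>0$ define, for $\varphi\in H^1((0,1))$, $$F_{\beta,\kappa}(\varphi)=\frac18\int_0^1\left(\varphi'(x)^2+\frac{1}{\beta^2}\sin^2\varphi(x)\right)dx-\frac{\kappa}{2}\int_0^1\varphi'(x)\,dx,$$ and $\mathcal J=\{\varphi\in H^1((0,1)):\varphi(0)=0\}$. *)

theory Defs
  imports "HOL-Analysis.Analysis"
begin

definition is_weak_deriv :: "(real \<Rightarrow> real) \<Rightarrow> (real \<Rightarrow> real) \<Rightarrow> bool" where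
  "is_weak_deriv \<phi> g \<longleftrightarrow>
     set_integrable lborel {0..1} g \<and>
     set_integrable lborel {0..1} (\<lambda>x. (g x)\<^sup>2) \<and>
     (\<forall>x\<in>{0..1}. \<phi> x = \<phi> 0 + (LBINT t:{0..x}. g t))"

text \<open>H^1((0,1)), identified with its continuous representatives on [0,1].\<close>
definition H1 :: "(real \<Rightarrow> real) set" where
  "H1 = {\<phi>. \<exists>g. is_weak_deriv \<phi> g}"

definition wderiv :: "(real \<Rightarrow> real) \<Rightarrow> real \<Rightarrow> real" where
  "wderiv \<phi> = (SOME g. is_weak_deriv \<phi> g)"

definition F :: "real \<Rightarrow> real \<Rightarrow> (real \<Rightarrow> real) \<Rightarrow> real" where
  "F \<beta> \<kappa> \<phi> =
     1/8 * (LBINT x:{0..1}. (wderiv \<phi> x)\<^sup>2 + (1/\<beta>\<^sup>2) * (sin (\<phi> x))\<^sup>2)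
     - \<kappa>/2 * (LBINT x:{0..1}. wderiv \<phi> x)"

definition J :: "(real \<Rightarrow> real) set" where
  "J = {\<phi>. \<phi> \<in> H1 \<and> \<phi> 0 = 0}"

definition is_minimizer :: "real \<Rightarrow> real \<Rightarrow> (real \<Rightarrow> real) \<Rightarrow> bool" where
  "is_minimizer \<beta> \<kappa> \<phi> \<longleftrightarrow> \<phi> \<in> J \<and> (\<forall>\<psi>\<in>J. F \<beta> \<kappa> \<phi> \<le> F \<beta> \<kappa> \<psi>)"

end

theory Submission
  imports Defs
begin

text \<open>Any \<open>\<phi> \<in> J\<close> has \<open>F(\<phi>) \<ge> -\<kappa> \<phi>(1)/2\<close>, since the energy term is nonnegative and
  \<open>\<phi>'\<close> integrates to \<open>\<phi>(1)\<close>. So it suffices to exhibit a competitor with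
  \<open>F < -\<kappa>\<pi>/2\<close>. It is built from \<open>n \<approx> 1/(2C\<beta>)\<close> consecutive cells of width \<open>2C\<beta>\<close>,
  each carrying a stretched sine-Gordon kink \<open>\<pi>/2 + \<lambda> arctan (sinh ((x - C\<beta>)/\<beta>))\<close> that rises
  by \<open>\<pi>\<close>. Its energy density is at most \<open>(\<lambda>\<^sup>2 + 1)/(\<beta> cosh ((x - C\<beta>)/\<beta>))\<^sup>2\<close>, which
  integrates to less than \<open>2(\<lambda>\<^sup>2 + 1)/\<beta>\<close> per cell. Hence
  \<open>F \<le> (\<lambda>\<^sup>2 + 1)(n + 1)/(4\<beta>) - \<kappa>\<pi>n/2\<close>, and with \<open>\<lambda>\<^sup>2 = \<kappa>\<beta>\<pi> > 1\<close> this drops below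
  \<open>-\<kappa>\<pi>/2\<close> once \<open>n\<close> is large, i.e. once \<open>\<beta>\<close> is small.\<close>

section \<open>Weak derivatives\<close>

lemma AE_eq_0_if_integral_greaterThan_eq_0:
  fixes h :: "real \<Rightarrow> real"
  assumes h: "integrable lborel h"
    and zero: "\<And>a. (LINT x|lborel. indicator {a<..} x * h x) = 0"
  shows "AE x in lborel. h x = 0"
proof -
  \<comment> \<open>The positive and negative parts of \<open>h\<close> have densities agreeing on all half-lines.\<close>
  have [measurable]: "h \<in> borel_measurable lborel" using h by auto
  have int_pos: "integrable lborel (\<lambda>x. indicator {a<..} x * max 0 (f x))"
    if "integrable lborel f" for f :: "real \<Rightarrow> real" and a
    using integrable_mult_indicator[of "{a<..}" lborel "\<lambda>x. max 0 (f x)"] that by auto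
  have emeasure_eq: "emeasure (density lborel (\<lambda>x. ennreal (max 0 (f x)))) {a<..}
      = ennreal (LINT x|lborel. indicator {a<..} x * max 0 (f x))"
    if "integrable lborel f" for f :: "real \<Rightarrow> real" and a
    using that int_pos[OF that]
    by (subst emeasure_density, force, simp, subst nn_integral_eq_integral[symmetric])
       (auto intro!: nn_integral_cong split: split_indicator)
  have "(LINT x|lborel. indicator {a<..} x * max 0 (h x))
      = (LINT x|lborel. indicator {a<..} x * max 0 (- h x))" for a
  proof -
    have "(LINT x|lborel. indicator {a<..} x * max 0 (h x)) - (LINT x|lborel. indicator {a<..} x * max 0 (- h x))
        = (LINT x|lborel. indicator {a<..} x * h x)"
      unfolding Bochner_Integration.integral_diff[OF int_pos[OF h] int_pos[of "\<lambda>x. - h x"],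
          symmetric, OF integrable_minus[OF h]]
      by (intro Bochner_Integration.integral_cong) (auto simp: indicator_def)
    then show ?thesis using zero[of a] by simp
  qed
  then have "density lborel (\<lambda>x. ennreal (max 0 (h x))) = density lborel (\<lambda>x. ennreal (max 0 (- h x)))"
    using h by (intro measure_eqI_lessThan) (auto simp: emeasure_eq)
  then have "AE x in lborel. ennreal (max 0 (h x)) = ennreal (max 0 (- h x))"
    by (intro sigma_finite_measure.density_unique[OF sigma_finite_lborel]) auto
  then show ?thesis by eventually_elim (auto simp: max_def split: if_splits)
qed

lemma is_weak_deriv_wderiv: "\<phi> \<in> H1 \<Longrightarrow> is_weak_deriv \<phi> (wderiv \<phi>)"
proof -
  assume "\<phi> \<in> H1"
  then obtain g where "is_weak_deriv \<phi> g" unfolding H1_def by blast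
  then show ?thesis unfolding wderiv_def by (rule someI[of "is_weak_deriv \<phi>" g])
qed

lemma
  assumes "is_weak_deriv \<phi> g"
  shows is_weak_deriv_integrable: "set_integrable lborel {0..1} g"
    and is_weak_deriv_square_integrable: "set_integrable lborel {0..1} (\<lambda>x. (g x)\<^sup>2)"
  using assms unfolding is_weak_deriv_def by blast+

lemma is_weak_deriv_integral:
  assumes "is_weak_deriv \<phi> g" "x \<in> {0..1}"
  shows "(LBINT t:{0..x}. g t) = \<phi> x - \<phi> 0"
proof -
  have "\<phi> x = \<phi> 0 + (LBINT t:{0..x}. g t)" using assms unfolding is_weak_deriv_def by blast
  then show ?thesis by simp
qed

lemma weak_deriv_unique:
  assumes g1: "is_weak_deriv \<phi> g1" and g2: "is_weak_deriv \<phi> g2"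
  shows "AE x in lborel. x \<in> {0..1} \<longrightarrow> g1 x = g2 x"
proof -
  have int: "set_integrable lborel {0..b} (\<lambda>t. g1 t - g2 t)" if "b \<le> 1" for b
    by (rule set_integrable_subset[OF set_integral_diff(1)[OF
          is_weak_deriv_integrable[OF g1] is_weak_deriv_integrable[OF g2]]]) (use that in auto)
  have vanish: "(LBINT t:{0..b}. g1 t - g2 t) = 0" if "b \<le> 1" for b
  proof (cases "0 \<le> b")
    case True
    have "(LBINT t:{0..b}. g1 t - g2 t) = (LBINT t:{0..b}. g1 t) - (LBINT t:{0..b}. g2 t)"
      using that
      by (intro set_integral_diff(2) set_integrable_subset[OF is_weak_deriv_integrable[OF g1]]
          set_integrable_subset[OF is_weak_deriv_integrable[OF g2]]) auto
    also have "\<dots> = 0"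
      using is_weak_deriv_integral[OF g1] is_weak_deriv_integral[OF g2] that True by force
    finally show ?thesis .
  qed (simp add: set_lebesgue_integral_def)
  have "(LINT x|lborel. indicator {a<..} x * (indicator {0..1} x * (g1 x - g2 x))) = 0" for a :: real
  proof -
    have "(LINT x|lborel. indicator {a<..} x * (indicator {0..1} x * (g1 x - g2 x)))
        = (LINT x|lborel. indicator {0..1} x *\<^sub>R (g1 x - g2 x)
            - indicator {0..min a 1} x *\<^sub>R (g1 x - g2 x))"
      by (intro Bochner_Integration.integral_cong) (auto simp: indicator_def)
    also have "\<dots> = (LBINT t:{0..1}. g1 t - g2 t) - (LBINT t:{0..min a 1}. g1 t - g2 t)"
      using int[of 1] int[of "min a 1"] unfolding set_lebesgue_integral_def set_integrable_def
      by (intro Bochner_Integration.integral_diff) auto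
    finally show ?thesis using vanish[of 1] vanish[of "min a 1"] by simp
  qed
  moreover have "integrable lborel (\<lambda>x. indicator {0..1} x * (g1 x - g2 x))"
    using int[of 1] by (simp add: set_integrable_def)
  ultimately have "AE x in lborel. indicator {0..1} x * (g1 x - g2 x) = (0::real)"
    by (intro AE_eq_0_if_integral_greaterThan_eq_0)
  then show ?thesis by eventually_elim (auto simp: indicator_def)
qed

lemma integral_wderiv_eq:
  assumes "\<phi> \<in> J"
  shows "(LBINT x:{0..1}. wderiv \<phi> x) = \<phi> 1"
proof -
  have "is_weak_deriv \<phi> (wderiv \<phi>)" "\<phi> 0 = 0"
    using assms is_weak_deriv_wderiv unfolding J_def by auto
  then show ?thesis using is_weak_deriv_integral[of \<phi> "wderiv \<phi>" 1] by simp
qed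

lemma F_ge_endpoint:
  assumes "\<phi> \<in> J"
  shows "- \<kappa>/2 * \<phi> 1 \<le> F \<beta> \<kappa> \<phi>"
proof -
  have "0 \<le> (LBINT x:{0..1::real}. (wderiv \<phi> x)\<^sup>2 + (1/\<beta>\<^sup>2) * (sin (\<phi> x))\<^sup>2)"
    unfolding set_lebesgue_integral_def by (intro Bochner_Integration.integral_nonneg) auto
  then show ?thesis unfolding F_def integral_wderiv_eq[OF assms] by simp
qed

lemma F_eq_weak_deriv:
  assumes g: "is_weak_deriv \<phi> g" and "\<phi> 0 = 0" and cont: "continuous_on {0..1} \<phi>"
  shows "F \<beta> \<kappa> \<phi> = 1/8 * (LBINT x:{0..1}. (g x)\<^sup>2 + (1/\<beta>\<^sup>2) * (sin (\<phi> x))\<^sup>2) - \<kappa>/2 * \<phi> 1"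
proof -
  have J: "\<phi> \<in> J" unfolding J_def H1_def using assms by blast
  have sin_int: "set_integrable lborel {0..1} (\<lambda>x. (1/\<beta>\<^sup>2) * (sin (\<phi> x))\<^sup>2)"
    by (intro borel_integrable_atLeastAtMost' continuous_intros cont)
  have int: "set_integrable lborel {0..1} (\<lambda>x. (f x)\<^sup>2 + (1/\<beta>\<^sup>2) * (sin (\<phi> x))\<^sup>2)"
    if "is_weak_deriv \<phi> f" for f
    using is_weak_deriv_square_integrable[OF that] sin_int by (rule set_integral_add)
  have "AE x in lborel. x \<in> {0..1} \<longrightarrow> wderiv \<phi> x = g x"
    using weak_deriv_unique is_weak_deriv_wderiv J g unfolding J_def by blast
  then have "AE x in lborel. indicator {0..1} x *\<^sub>R ((wderiv \<phi> x)\<^sup>2 + (1/\<beta>\<^sup>2) * (sin (\<phi> x))\<^sup>2)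
      = indicator {0..1} x *\<^sub>R ((g x)\<^sup>2 + (1/\<beta>\<^sup>2) * (sin (\<phi> x))\<^sup>2)"
    by eventually_elim (auto simp: indicator_def)
  then have "(LBINT x:{0..1}. (wderiv \<phi> x)\<^sup>2 + (1/\<beta>\<^sup>2) * (sin (\<phi> x))\<^sup>2)
      = (LBINT x:{0..1}. (g x)\<^sup>2 + (1/\<beta>\<^sup>2) * (sin (\<phi> x))\<^sup>2)"
    using int[OF g] int[OF is_weak_deriv_wderiv] J
    unfolding J_def set_integrable_def set_lebesgue_integral_def
    by (intro integral_cong_AE borel_measurable_integrable) auto
  then show ?thesis unfolding F_def integral_wderiv_eq[OF J] by simp
qed

lemma minimizer_endpoint_ge:
  assumes "is_minimizer \<beta> \<kappa> \<phi>" "\<kappa> > 0" "\<psi> \<in> J" "F \<beta> \<kappa> \<psi> \<le> - \<kappa>/2 * c"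
  shows "c \<le> \<phi> 1"
proof -
  have "- \<kappa>/2 * \<phi> 1 \<le> - \<kappa>/2 * c"
    using assms F_ge_endpoint[of \<phi> \<kappa> \<beta>] unfolding is_minimizer_def by (meson order_trans)
  then show ?thesis using \<open>\<kappa> > 0\<close> by simp
qed

section \<open>Periodic repetition of a profile\<close>

definition periodic_ext :: "real \<Rightarrow> (real \<Rightarrow> real) \<Rightarrow> real \<Rightarrow> real" where
  "periodic_ext w p x = p (w * frac (x / w))"

definition periodic_lift :: "real \<Rightarrow> real \<Rightarrow> (real \<Rightarrow> real) \<Rightarrow> real \<Rightarrow> real" where
  "periodic_lift w H P x = H * of_int \<lfloor>x / w\<rfloor> + P (w * frac (x / w))"

lemma scaled_frac_bounds:
  assumes "w > 0"
  shows "0 \<le> w * frac (x / w)" "w * frac (x / w) < w"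
  using assms frac_lt_1[of "x / w"] by auto

lemma periodic_ext_set_integrable:
  assumes "continuous_on UNIV p" "w > 0" "\<And>z. 0 \<le> z \<Longrightarrow> z < w \<Longrightarrow> \<bar>p z\<bar> \<le> M"
  shows "set_integrable lborel {a..b} (periodic_ext w p)"
  unfolding set_integrable_def
proof (rule integrableI_bounded_set_indicator[where B = M])
  have [measurable]: "p \<in> borel_measurable borel"
    using assms(1) by (rule borel_measurable_continuous_onI)
  show "periodic_ext w p \<in> borel_measurable lborel"
    unfolding periodic_ext_def frac_def by measurable
  show "AE x in lborel. x \<in> {a..b} \<longrightarrow> norm (periodic_ext w p x) \<le> M"
    using assms(3) scaled_frac_bounds[OF assms(2)] by (auto simp: periodic_ext_def)
qed (auto simp: emeasure_lborel_Icc_eq)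

locale periodic_profile =
  fixes w H :: real and P p :: "real \<Rightarrow> real"
  assumes period_pos: "w > 0" and profile_0: "P 0 = 0" and profile_period: "P w = H"
    and profile_deriv: "\<And>z. (P has_real_derivative p z) (at z)"
begin

lemma periodic_lift_on_period:
  fixes m :: int
  assumes "x \<in> {m*w..(m+1)*w}"
  shows "periodic_lift w H P x = H * m + P (x - m * w)"
proof (cases "x = (m+1)*w")
  case True
  then have "x / w = of_int (m + 1)" using period_pos by simp
  then show ?thesis using True profile_0 profile_period
    by (simp only: periodic_lift_def floor_of_int frac_of_int) (simp add: algebra_simps)
next
  case False
  then have "m \<le> x / w" "x / w < m + 1" using assms period_pos by (auto simp: field_simps)
  then have "\<lfloor>x/w\<rfloor> = m" by (simp add: floor_eq_iff)
  then show ?thesis using period_pos by (simp add: periodic_lift_def frac_def algebra_simps)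
qed

lemma continuous_on_periodic_lift: "continuous_on {a..b} (periodic_lift w H P)"
proof -
  let ?I = "{\<lfloor>a/w\<rfloor>..\<lfloor>b/w\<rfloor>}"
  have P_cont: "continuous_on S P" for S
    using profile_deriv by (meson DERIV_isCont continuous_at_imp_continuous_on)
  have "continuous_on (\<Union>m\<in>?I. {real_of_int m*w..(m+1)*w}) (periodic_lift w H P)"
  proof (rule continuous_on_closed_Union)
    fix m assume "m \<in> ?I"
    have "continuous_on {real_of_int m*w..(m+1)*w} (\<lambda>x. H * m + P (x - m * w))"
      by (intro continuous_intros continuous_on_compose2[OF P_cont[of UNIV]]) auto
    then show "continuous_on {real_of_int m*w..(m+1)*w} (periodic_lift w H P)"
      by (rule continuous_on_cong[THEN iffD1, rotated 2]) (auto simp: periodic_lift_on_period)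
  qed auto
  moreover have "{a..b} \<subseteq> (\<Union>m\<in>?I. {real_of_int m*w..(m+1)*w})"
  proof
    fix x assume x: "x \<in> {a..b}"
    have "\<lfloor>x/w\<rfloor> \<in> ?I" using x period_pos by (auto intro!: floor_mono divide_right_mono)
    moreover have "x \<in> {real_of_int \<lfloor>x/w\<rfloor>*w..(\<lfloor>x/w\<rfloor>+1)*w}"
      using scaled_frac_bounds[OF period_pos, of x] period_pos by (auto simp: frac_def algebra_simps)
    ultimately show "x \<in> (\<Union>m\<in>?I. {real_of_int m*w..(m+1)*w})" by blast
  qed
  ultimately show ?thesis by (rule continuous_on_subset)
qed

lemma periodic_lift_deriv:
  assumes "x / w \<notin> \<int>"
  shows "(periodic_lift w H P has_real_derivative periodic_ext w p x) (at x)"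
proof -
  let ?m = "\<lfloor>x/w\<rfloor>"
  let ?S = "{real_of_int ?m * w <..< (?m+1)*w}"
  have "?m < x/w"
    using assms by (metis Ints_of_int floor_less_iff floor_of_int less_le not_le of_int_floor_le)
  moreover have "x/w < ?m + 1" by linarith
  ultimately have x: "x \<in> ?S" using period_pos by (auto simp: field_simps)
  have "((\<lambda>y. H * ?m + P (y - ?m * w)) has_real_derivative p (x - ?m * w)) (at x)"
    by (rule derivative_eq_intros DERIV_chain2[OF profile_deriv] | simp)+
  moreover have "p (x - ?m * w) = periodic_ext w p x"
    using period_pos by (simp add: periodic_ext_def frac_def algebra_simps)
  ultimately have d: "((\<lambda>y. H * ?m + P (y - ?m * w)) has_real_derivative periodic_ext w p x) (at x)"
    by simp
  show ?thesis
  proof (rule has_field_derivative_transform_within_open[OF d, where S = ?S])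
    fix y assume "y \<in> ?S"
    then show "H * ?m + P (y - ?m * w) = periodic_lift w H P y"
      by (subst periodic_lift_on_period[of _ ?m]) auto
  qed (use x in auto)
qed

lemma periodic_ext_has_integral:
  assumes "a \<le> b"
  shows "(periodic_ext w p has_integral periodic_lift w H P b - periodic_lift w H P a) {a..b}"
proof (rule fundamental_theorem_of_calculus_interior_strong)
  let ?S = "(\<lambda>m. real_of_int m * w) ` {\<lfloor>a/w\<rfloor>..\<lceil>b/w\<rceil>}"
  show "finite ?S" by simp
  fix x assume x: "x \<in> {a<..<b} - ?S"
  have "x / w \<notin> \<int>"
  proof
    assume "x / w \<in> \<int>"
    then obtain m where m: "x / w = of_int m" by (auto elim: Ints_cases)
    have "a/w \<le> x/w" "x/w \<le> b/w" using x period_pos by (auto intro!: divide_right_mono)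
    then have "m \<in> {\<lfloor>a/w\<rfloor>..\<lceil>b/w\<rceil>}" using m by (auto simp: floor_le_iff le_ceiling_iff)
    moreover have "x = m * w" using m period_pos by (simp add: field_simps)
    ultimately show False using x by auto
  qed
  then show "(periodic_lift w H P has_vector_derivative periodic_ext w p x) (at x)"
    using periodic_lift_deriv has_real_derivative_iff_has_vector_derivative by blast
qed (use assms continuous_on_periodic_lift in auto)

lemma periodic_ext_integral:
  assumes "continuous_on UNIV p" "\<And>z. 0 \<le> z \<Longrightarrow> z < w \<Longrightarrow> \<bar>p z\<bar> \<le> M" "a \<le> b"
  shows "(LBINT t:{a..b}. periodic_ext w p t) = periodic_lift w H P b - periodic_lift w H P a"
  using periodic_ext_set_integrable[OF assms(1) period_pos assms(2)]
    integral_unique[OF periodic_ext_has_integral[OF assms(3)]]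
  by (simp add: set_borel_integral_eq_integral)

end

section \<open>The kink competitor\<close>

lemma sin_sq_add_int_pi: "(sin (pi * of_int m + t))\<^sup>2 = (sin t)\<^sup>2"
proof -
  have "(cos (pi * of_int m))\<^sup>2 = 1"
    using sin_cos_squared_add[of "pi * of_int m"] by simp
  then show ?thesis by (simp add: sin_add power_mult_distrib)
qed

locale kink_competitor =
  fixes \<beta> C :: real
  assumes \<beta>_pos: "\<beta> > 0" and C_pos: "C > 0"
begin

text \<open>The factor \<open>lam \<ge> 1\<close> stretches the kink so that it rises by exactly \<open>\<pi>\<close> across the
  cell \<open>[0, w]\<close>.\<close>

definition "lam = (pi/2) / arctan (sinh C)"
definition "w = 2 * C * \<beta>"
definition "rescale z = (z - C * \<beta>) / \<beta>"
definition "kink z = pi/2 + lam * arctan (sinh (rescale z))"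
definition "kink_slope z = lam / (\<beta> * cosh (rescale z))"
definition "sech_sq z = 1 / (\<beta> * cosh (rescale z))\<^sup>2"
definition "sech_sq_primitive z = (tanh (rescale z) + tanh C) / \<beta>"

lemma period_pos: "w > 0"
  using \<beta>_pos C_pos by (simp add: w_def)

lemma rescale_0: "rescale 0 = - C" and rescale_period: "rescale w = C"
  using \<beta>_pos by (simp_all add: rescale_def w_def field_simps)

lemma continuous_rescale: "continuous_on S rescale"
  using \<beta>_pos unfolding rescale_def by (intro continuous_intros) auto

lemma rescale_deriv: "(rescale has_real_derivative 1 / \<beta>) (at z)"
  using \<beta>_pos unfolding rescale_def by (auto intro!: derivative_eq_intros)

lemma abs_arctan_sinh_rescale_le:
  assumes "0 \<le> z" "z \<le> w"
  shows "\<bar>arctan (sinh (rescale z))\<bar> \<le> arctan (sinh C)"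
proof -
  have "- C \<le> rescale z" "rescale z \<le> C"
    using assms \<beta>_pos by (auto simp: rescale_def w_def field_simps)
  then show ?thesis by (simp add: abs_le_iff arctan_le_iff flip: arctan_minus sinh_minus)
qed

lemma lam_arctan: "lam * arctan (sinh C) = pi/2"
  using C_pos arctan_monotone[of 0 "sinh C"] by (simp add: lam_def)

lemma lam_ge_1: "1 \<le> lam"
  using C_pos arctan_monotone[of 0 "sinh C"] arctan_ubound[of "sinh C"] by (simp add: lam_def field_simps)

lemma abs_lam_arctan_le:
  assumes "0 \<le> z" "z \<le> w"
  shows "\<bar>lam * arctan (sinh (rescale z))\<bar> \<le> pi/2"
  using mult_left_mono[OF abs_arctan_sinh_rescale_le[OF assms], of lam] lam_ge_1 lam_arctan
  by (simp add: abs_mult)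

lemma kink_0: "kink 0 = 0" and kink_period: "kink w = pi"
  using lam_arctan by (simp_all add: kink_def rescale_0 rescale_period arctan_minus)

lemma kink_deriv: "(kink has_real_derivative kink_slope z) (at z)"
proof -
  let ?s = "sinh (rescale z)" and ?c = "cosh (rescale z)"
  have "1 + ?s\<^sup>2 = ?c\<^sup>2" by (simp add: cosh_square_eq)
  then have slope: "lam * (inverse (1 + ?s\<^sup>2) * (?c * (1 / \<beta>))) = kink_slope z"
    using \<beta>_pos cosh_real_ge_1[of "rescale z"] by (simp add: kink_slope_def power2_eq_square field_simps)
  have "(kink has_real_derivative lam * (inverse (1 + ?s\<^sup>2) * (?c * (1 / \<beta>)))) (at z)"
    unfolding kink_def by (rule derivative_eq_intros DERIV_chain2[OF DERIV_arctan] rescale_deriv | simp)+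
  then show ?thesis by (simp only: slope)
qed

lemma kink_nonneg: "0 \<le> z \<Longrightarrow> z \<le> w \<Longrightarrow> 0 \<le> kink z"
  using abs_lam_arctan_le by (fastforce simp: kink_def abs_le_iff)

lemma sin_kink_sq_le:
  assumes "0 \<le> z" "z \<le> w"
  shows "(sin (kink z))\<^sup>2 \<le> 1 / (cosh (rescale z))\<^sup>2"
proof -
  define a where "a = arctan (sinh (rescale z))"
  have t: "\<bar>lam * a\<bar> \<le> pi/2" using abs_lam_arctan_le[OF assms] by (simp add: a_def)
  have "\<bar>a\<bar> \<le> \<bar>lam * a\<bar>" using lam_ge_1 mult_right_mono[OF lam_ge_1, of "\<bar>a\<bar>"] by (simp add: abs_mult)
  then have "cos \<bar>lam * a\<bar> \<le> cos \<bar>a\<bar>" using t by (subst cos_mono_le_eq) auto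
  moreover have "sin (kink z) = cos \<bar>lam * a\<bar>" by (simp add: kink_def a_def sin_add)
  moreover have "0 \<le> cos \<bar>lam * a\<bar>" using t by (intro cos_ge_zero) auto
  ultimately have "(sin (kink z))\<^sup>2 \<le> (cos a)\<^sup>2" by (simp add: power_mono)
  also have "\<dots> = 1 / (cosh (rescale z))\<^sup>2"
    by (simp add: a_def cos_arctan power_divide cosh_square_eq)
  finally show ?thesis .
qed

lemma kink_energy_density_le:
  assumes "0 \<le> z" "z \<le> w"
  shows "(kink_slope z)\<^sup>2 + 1/\<beta>\<^sup>2 * (sin (kink z))\<^sup>2 \<le> (lam\<^sup>2 + 1) * sech_sq z"
proof -
  have "1/\<beta>\<^sup>2 * (sin (kink z))\<^sup>2 \<le> 1/\<beta>\<^sup>2 * (1 / (cosh (rescale z))\<^sup>2)"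
    using sin_kink_sq_le[OF assms] by (intro mult_left_mono) auto
  moreover have "1/\<beta>\<^sup>2 * (1 / (cosh (rescale z))\<^sup>2) = sech_sq z"
    by (simp add: sech_sq_def power_mult_distrib)
  moreover have "(kink_slope z)\<^sup>2 = lam\<^sup>2 * sech_sq z"
    by (simp add: kink_slope_def sech_sq_def power_divide)
  ultimately show ?thesis by (simp add: distrib_right)
qed

lemma abs_kink_slope_le: "\<bar>kink_slope z\<bar> \<le> lam / \<beta>"
  using \<beta>_pos lam_ge_1 cosh_real_ge_1[of "rescale z"]
  by (auto simp: kink_slope_def abs_mult intro!: divide_left_mono mult_pos_pos)

lemma abs_sech_sq_le: "\<bar>sech_sq z\<bar> \<le> 1 / \<beta>\<^sup>2"
proof -
  have "\<beta>\<^sup>2 \<le> (\<beta> * cosh (rescale z))\<^sup>2"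
    using \<beta>_pos cosh_real_ge_1[of "rescale z"] by (intro power_mono) auto
  then show ?thesis using \<beta>_pos by (simp add: sech_sq_def divide_left_mono)
qed

lemma sech_sq_primitive_deriv: "(sech_sq_primitive has_real_derivative sech_sq z) (at z)"
proof -
  have "(sinh (rescale z))\<^sup>2 + 1 > 0" by (intro add_nonneg_pos) auto
  then have "1 - (tanh (rescale z))\<^sup>2 = 1 / (cosh (rescale z))\<^sup>2"
    by (simp add: tanh_def power_divide cosh_square_eq divide_simps)
  then have slope: "((1 - (tanh (rescale z))\<^sup>2) * (1 / \<beta>) + 0) / \<beta> = sech_sq z"
    by (simp add: sech_sq_def power2_eq_square)
  have "(sech_sq_primitive has_real_derivative ((1 - (tanh (rescale z))\<^sup>2) * (1 / \<beta>) + 0) / \<beta>) (at z)"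
    unfolding sech_sq_primitive_def
    by (intro DERIV_cdivide DERIV_add DERIV_const has_field_derivative_tanh rescale_deriv) simp
  then show ?thesis by (simp only: slope)
qed

lemma sech_sq_primitive_0: "sech_sq_primitive 0 = 0"
  and sech_sq_primitive_period: "sech_sq_primitive w = 2 * tanh C / \<beta>"
  by (simp_all add: sech_sq_primitive_def rescale_0 rescale_period)

lemma sech_sq_primitive_le: "sech_sq_primitive z \<le> 2 / \<beta>"
  using tanh_real_lt_1[of C] tanh_real_lt_1[of "rescale z"] \<beta>_pos
  by (simp add: sech_sq_primitive_def divide_right_mono)

lemma continuous_kink_slope: "continuous_on UNIV kink_slope"
  unfolding kink_slope_def using \<beta>_pos cosh_real_ge_1
  by (intro continuous_intros continuous_rescale) (auto intro: mult_pos_pos)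

lemma continuous_sech_sq: "continuous_on UNIV sech_sq"
  unfolding sech_sq_def using \<beta>_pos cosh_real_ge_1
  by (intro continuous_intros continuous_rescale) auto

definition "competitor = periodic_lift w pi kink"
definition "competitor_slope = periodic_ext w kink_slope"
definition "periods = \<lfloor>1 / w\<rfloor>"

lemma kink_periodic_profile: "periodic_profile w pi kink kink_slope"
  by unfold_locales (simp_all add: period_pos kink_0 kink_period kink_deriv)

lemma sech_sq_periodic_profile:
  "periodic_profile w ((lam\<^sup>2 + 1) * (2 * tanh C / \<beta>))
     (\<lambda>z. (lam\<^sup>2 + 1) * sech_sq_primitive z) (\<lambda>z. (lam\<^sup>2 + 1) * sech_sq z)"
  by unfold_locales
    (simp_all add: period_pos sech_sq_primitive_0 sech_sq_primitive_period DERIV_cmult sech_sq_primitive_deriv)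

lemma competitor_0: "competitor 0 = 0"
  by (simp add: competitor_def periodic_lift_def kink_0)

lemma continuous_competitor: "continuous_on {0..1} competitor"
  unfolding competitor_def by (rule periodic_profile.continuous_on_periodic_lift[OF kink_periodic_profile])

lemma competitor_weak_deriv: "is_weak_deriv competitor competitor_slope"
  unfolding is_weak_deriv_def
proof (intro conjI ballI)
  show "set_integrable lborel {0..1} competitor_slope"
    unfolding competitor_slope_def
    by (rule periodic_ext_set_integrable[OF continuous_kink_slope period_pos abs_kink_slope_le])
  have "\<bar>(kink_slope z)\<^sup>2\<bar> \<le> (lam / \<beta>)\<^sup>2" for z
    using power_mono[OF abs_kink_slope_le[of z], of 2] by simp
  then have "set_integrable lborel {0..1} (periodic_ext w (\<lambda>z. (kink_slope z)\<^sup>2))"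
    by (intro periodic_ext_set_integrable period_pos continuous_intros continuous_kink_slope)
  then show "set_integrable lborel {0..1} (\<lambda>x. (competitor_slope x)\<^sup>2)"
    unfolding competitor_slope_def periodic_ext_def[abs_def] by simp
  fix x :: real assume "x \<in> {0..1}"
  then show "competitor x = competitor 0 + (LBINT t:{0..x}. competitor_slope t)"
    unfolding competitor_slope_def competitor_def
    by (subst periodic_profile.periodic_ext_integral[OF kink_periodic_profile
          continuous_kink_slope abs_kink_slope_le]) auto
qed

lemma competitor_in_J: "competitor \<in> J"
  using competitor_weak_deriv competitor_0 unfolding J_def H1_def by blast

lemma competitor_1_ge: "pi * periods \<le> competitor 1"
  using kink_nonneg[OF scaled_frac_bounds(1) less_imp_le[OF scaled_frac_bounds(2)], OF period_pos period_pos]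
  by (simp add: competitor_def periodic_lift_def periods_def)

lemma competitor_energy_le:
  "(LBINT x:{0..1}. (competitor_slope x)\<^sup>2 + (1/\<beta>\<^sup>2) * (sin (competitor x))\<^sup>2)
     \<le> (lam\<^sup>2 + 1) * (2/\<beta>) * (periods + 1)"
proof -
  let ?A = "lam\<^sup>2 + 1"
  let ?q = "\<lambda>z. ?A * sech_sq z" and ?Q = "\<lambda>z. ?A * sech_sq_primitive z"
  let ?H = "?A * (2 * tanh C / \<beta>)"
  have A: "?A > 0" by (intro add_nonneg_pos) auto
  have q_cont: "continuous_on UNIV ?q" by (intro continuous_intros continuous_sech_sq)
  have q_bound: "\<bar>?q z\<bar> \<le> ?A * (1/\<beta>\<^sup>2)" for z
    using mult_left_mono[OF abs_sech_sq_le[of z], of ?A] A by (simp add: abs_mult)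
  have "set_integrable lborel {0..1} (\<lambda>x. (competitor_slope x)\<^sup>2 + (1/\<beta>\<^sup>2) * (sin (competitor x))\<^sup>2)"
    by (intro set_integral_add[OF is_weak_deriv_square_integrable[OF competitor_weak_deriv]]
        borel_integrable_atLeastAtMost' continuous_intros continuous_competitor)
  moreover have "set_integrable lborel {0..1} (periodic_ext w ?q)"
    by (rule periodic_ext_set_integrable[OF q_cont period_pos q_bound])
  moreover have "(competitor_slope x)\<^sup>2 + (1/\<beta>\<^sup>2) * (sin (competitor x))\<^sup>2 \<le> periodic_ext w ?q x" for x
  proof -
    have "(sin (competitor x))\<^sup>2 = (sin (kink (w * frac (x / w))))\<^sup>2"
      unfolding competitor_def periodic_lift_def by (rule sin_sq_add_int_pi)
    then show ?thesis
      using kink_energy_density_le[OF scaled_frac_bounds(1) less_imp_le[OF scaled_frac_bounds(2)],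
          OF period_pos period_pos]
      by (simp add: competitor_slope_def periodic_ext_def)
  qed
  ultimately have "(LBINT x:{0..1}. (competitor_slope x)\<^sup>2 + (1/\<beta>\<^sup>2) * (sin (competitor x))\<^sup>2)
      \<le> (LBINT x:{0..1}. periodic_ext w ?q x)"
    by (rule set_integral_mono)
  also have "\<dots> = periodic_lift w ?H ?Q 1 - periodic_lift w ?H ?Q 0"
    by (rule periodic_profile.periodic_ext_integral[OF sech_sq_periodic_profile q_cont q_bound]) simp
  also have "\<dots> = ?H * periods + ?Q (w * frac (1 / w))"
    by (simp add: periodic_lift_def periods_def sech_sq_primitive_0)
  also have "\<dots> \<le> ?A * (2/\<beta>) * periods + ?A * (2/\<beta>)"
  proof (intro add_mono mult_right_mono mult_left_mono)
    show "2 * tanh C / \<beta> \<le> 2 / \<beta>" using tanh_real_lt_1[of C] \<beta>_pos by (simp add: divide_right_mono)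
    show "0 \<le> real_of_int periods" using period_pos by (simp add: periods_def)
  qed (use A sech_sq_primitive_le in auto)
  finally show ?thesis by (simp only: of_int_add of_int_1 distrib_left mult_1_right)
qed

lemma F_competitor_le:
  assumes "0 \<le> \<kappa>"
  shows "F \<beta> \<kappa> competitor \<le> (lam\<^sup>2 + 1) * (periods + 1) / (4 * \<beta>) - \<kappa>/2 * pi * periods"
proof -
  have "F \<beta> \<kappa> competitor = 1/8 * (LBINT x:{0..1}. (competitor_slope x)\<^sup>2 + (1/\<beta>\<^sup>2) * (sin (competitor x))\<^sup>2)
      - \<kappa>/2 * competitor 1"
    by (rule F_eq_weak_deriv[OF competitor_weak_deriv competitor_0 continuous_competitor])
  also have "\<dots> \<le> 1/8 * ((lam\<^sup>2 + 1) * (2/\<beta>) * (periods + 1)) - \<kappa>/2 * (pi * periods)"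
    using competitor_energy_le competitor_1_ge assms by (intro diff_mono mult_left_mono) auto
  also have "\<dots> = (lam\<^sup>2 + 1) * (periods + 1) / (4 * \<beta>) - \<kappa>/2 * pi * periods"
    using \<beta>_pos by (simp add: field_simps)
  finally show ?thesis .
qed

lemma many_periods:
  assumes "K > 1" "4 * K / (K - 1) < 1 / w"
  shows "3 * K + 1 < (K - 1) * periods"
proof -
  have "1 / w - 1 < periods" unfolding periods_def by linarith
  moreover have "4 * K / (K - 1) - 1 = (3 * K + 1) / (K - 1)"
    using assms(1) by (simp add: field_simps)
  ultimately have "(3 * K + 1) / (K - 1) < periods" using assms(2) by linarith
  then show ?thesis using assms(1) by (simp add: pos_divide_less_eq mult.commute)
qed

lemma F_competitor_le_neg_pi:
  assumes "\<kappa> > 0" and lam_sq: "lam\<^sup>2 = \<kappa> * \<beta> * pi"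
    and periods: "3 * lam\<^sup>2 + 1 < (lam\<^sup>2 - 1) * periods"
  shows "F \<beta> \<kappa> competitor \<le> - \<kappa>/2 * pi"
proof -
  have "F \<beta> \<kappa> competitor \<le> (lam\<^sup>2 + 1) * (periods + 1) / (4 * \<beta>) - \<kappa>/2 * pi * periods"
    using F_competitor_le assms(1) by simp
  also have "\<dots> = ((lam\<^sup>2 + 1) * (periods + 1) - 2 * lam\<^sup>2 * periods) / (4 * \<beta>)"
    using \<beta>_pos by (simp add: lam_sq field_simps)
  also have "\<dots> \<le> - 2 * lam\<^sup>2 / (4 * \<beta>)"
    using \<beta>_pos periods by (intro divide_right_mono) (auto simp: algebra_simps)
  also have "\<dots> = - \<kappa>/2 * pi"
    using \<beta>_pos by (simp add: lam_sq field_simps)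
  finally show ?thesis .
qed

end

lemma exists_kink_width:
  assumes "K > 1"
  shows "\<exists>C>0. ((pi/2) / arctan (sinh C))\<^sup>2 = K"
proof -
  define \<theta> where "\<theta> = (pi/2) / sqrt K"
  have \<theta>: "0 < \<theta>" "\<theta> < pi/2" using assms by (auto simp: \<theta>_def divide_less_eq)
  define C where "C = arsinh (tan \<theta>)"
  have "C > 0" using tan_gt_zero[OF \<theta>] by (simp add: C_def)
  moreover have "arctan (sinh C) = \<theta>" using \<theta> by (simp add: C_def arctan_tan)
  then have "((pi/2) / arctan (sinh C))\<^sup>2 = K" using assms by (simp add: \<theta>_def)
  ultimately show ?thesis by blast
qed

theorem lemma1:
  fixes \<kappa>t :: real
  assumes "\<kappa>t > 1 / pi"
  shows "\<exists>\<beta>0>0. \<forall>\<beta>. 0 < \<beta> \<and> \<beta> < \<beta>0 \<longrightarrow>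
           (\<forall>\<phi>. is_minimizer \<beta> (\<kappa>t / \<beta>) \<phi> \<longrightarrow> \<phi> 1 \<ge> pi)"
proof -
  define K where "K = \<kappa>t * pi"
  have K: "K > 1" using assms by (simp add: K_def divide_less_eq)
  then have \<kappa>t_pos: "\<kappa>t > 0"
    unfolding K_def by (metis less_trans pi_gt_zero zero_less_mult_pos2 zero_less_one)
  obtain C where C: "C > 0" and lam_sq: "((pi/2) / arctan (sinh C))\<^sup>2 = K"
    using exists_kink_width[OF K] by blast
  define \<beta>0 where "\<beta>0 = (K - 1) / (8 * C * K)"
  show ?thesis
  proof (intro exI[of _ \<beta>0] conjI allI impI)
    show "\<beta>0 > 0" using K C by (simp add: \<beta>0_def)
    fix \<beta> \<phi> assume \<beta>: "0 < \<beta> \<and> \<beta> < \<beta>0" and min: "is_minimizer \<beta> (\<kappa>t / \<beta>) \<phi>"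
    interpret kink_competitor \<beta> C using \<beta> C by unfold_locales auto
    have lam: "lam\<^sup>2 = K" using lam_sq by (simp add: lam_def)
    have "4 * K / (K - 1) < 1 / w" using \<beta> C K by (simp add: \<beta>0_def w_def field_simps)
    then have "3 * lam\<^sup>2 + 1 < (lam\<^sup>2 - 1) * periods" using many_periods K lam by simp
    then have "F \<beta> (\<kappa>t / \<beta>) competitor \<le> - (\<kappa>t / \<beta>)/2 * pi"
      using \<beta> \<kappa>t_pos by (intro F_competitor_le_neg_pi) (simp_all add: lam K_def)
    then show "pi \<le> \<phi> 1"
      using \<beta> \<kappa>t_pos by (intro minimizer_endpoint_ge[OF min _ competitor_in_J]) auto
  qed
qed

end
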